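(* Let $k,l\ge 1$ and let $V'(k,l)=\{x_1,\dots,x_k\}\times\{y_1,\dots,y_l\}$ with $x_1<\dots<x_k$ and $y_1<\dots<y_l$ real numbers. Let $S$ be a finite set of closed line segments in the plane, none of which is horizontal or vertical, whose union contains $V'(k,l)$. Then $|S|\ge k+l-2$. Moreover, if $k=1$ or $l=1$, or if $S$ is noncrossing, then $|S|\ge k+l-1$.
   Context: Segments are nondegenerate (positive length); a segment is horizontal (vertical) if its endpoints have equal $y$- (resp. $x$-) coordinates. A set of segments is noncrossing if any two of its segments intersect at most in a point that is a common endpoint of both. *)

theory Defs
  imports "HOL-Analysis.Analysis"
begin

type_synonym point = "real \<times> real"

definition is_segment :: "point set \<Rightarrow> bool" where
  "is_segment s \<longleftrightarrow> (\<exists>p q. p \<noteq> q \<and> s = closed_segment p q)"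

definition horizontal :: "point set \<Rightarrow> bool" where
  "horizontal s \<longleftrightarrow> (\<exists>p q. p \<noteq> q \<and> s = closed_segment p q \<and> snd p = snd q)"

definition vertical :: "point set \<Rightarrow> bool" where
  "vertical s \<longleftrightarrow> (\<exists>p q. p \<noteq> q \<and> s = closed_segment p q \<and> fst p = fst q)"

definition noncrossing :: "point set set \<Rightarrow> bool" where
  "noncrossing S \<longleftrightarrow>
     (\<forall>s\<in>S. \<forall>t\<in>S. s \<noteq> t \<longrightarrow>
        (\<exists>p q p' q'. s = closed_segment p q \<and> t = closed_segment p' q' \<and>
           (\<exists>z. s \<inter> t \<subseteq> {z}) \<and> s \<inter> t \<subseteq> {p, q} \<inter> {p', q'}))"

end

theory Submission
  imports Defs
begin

text \<open>Two distinct points of a segment that is neither horizontal nor vertical differ in both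
  coordinates, and the product of their coordinate differences has the sign of the slope. So such
  a segment meets every horizontal and every vertical line at most once, which settles the case
  \<open>k = 1\<close> or \<open>l = 1\<close>. Otherwise count the \<open>2k + 2l - 4\<close> grid points on the boundary of the
  bounding rectangle: they form two L-shaped chains at opposite corners (lower left and upper
  right for positive slope, upper left and lower right for negative slope), and a segment meets
  each chain at most once, hence covers at most two boundary points. If \<open>S\<close> is noncrossing, some
  segment covers at most one: otherwise the segment leaving the lower left corner towards the
  right or the upper edge would cross the segment leaving the lower right or the upper left
  corner at a point that is not an endpoint of both.\<close>

definition oblique :: "point set \<Rightarrow> bool" where
  "oblique s \<longleftrightarrow> (\<exists>p q. s = closed_segment p q \<and> fst p \<noteq> fst q \<and> snd p \<noteq> snd q)"

lemma oblique_if_not_axis_parallel: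
  assumes "is_segment s" "\<not> horizontal s" "\<not> vertical s"
  shows "oblique s"
  using assms unfolding is_segment_def horizontal_def vertical_def oblique_def by blast

lemma closed_segment_diff_scaleR:
  fixes p q :: "'a::real_vector"
  assumes "u \<in> closed_segment p q" "v \<in> closed_segment p q"
  obtains t where "u - v = t *\<^sub>R (q - p)"
proof -
  obtain a where a: "u = (1 - a) *\<^sub>R p + a *\<^sub>R q"
    using assms(1) unfolding in_segment by blast
  obtain b where b: "v = (1 - b) *\<^sub>R p + b *\<^sub>R q"
    using assms(2) unfolding in_segment by blast
  have "u - v = (a - b) *\<^sub>R (q - p)"
    unfolding a b by (simp add: algebra_simps)
  then show thesis by (rule that)
qed

lemma closed_segment_slope_sign:
  fixes p q u v :: point
  assumes "fst p \<noteq> fst q" "snd p \<noteq> snd q"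
    and "u \<in> closed_segment p q" "v \<in> closed_segment p q" "u \<noteq> v"
  shows "0 < (fst u - fst v) * (snd u - snd v) * ((fst q - fst p) * (snd q - snd p))"
proof -
  obtain t where t: "u - v = t *\<^sub>R (q - p)"
    using closed_segment_diff_scaleR[OF assms(3,4)] .
  with assms(5) have "t \<noteq> 0" by auto
  have "fst u - fst v = t * (fst q - fst p)" "snd u - snd v = t * (snd q - snd p)"
    using arg_cong[OF t, of fst] arg_cong[OF t, of snd] by simp_all
  then have "(fst u - fst v) * (snd u - snd v) * ((fst q - fst p) * (snd q - snd p))
      = (t * (fst q - fst p) * (snd q - snd p))\<^sup>2"
    by (simp add: power2_eq_square)
  then show ?thesis
    using assms(1,2) \<open>t \<noteq> 0\<close> by simp
qed

lemma oblique_points_differ: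
  assumes "oblique s" "u \<in> s" "v \<in> s" "u \<noteq> v"
  shows "fst u \<noteq> fst v" "snd u \<noteq> snd v"
proof -
  obtain p q where "s = closed_segment p q" "fst p \<noteq> fst q" "snd p \<noteq> snd q"
    using assms(1) unfolding oblique_def by blast
  then have "0 < (fst u - fst v) * (snd u - snd v) * ((fst q - fst p) * (snd q - snd p))"
    using closed_segment_slope_sign assms(2-4) by blast
  then show "fst u \<noteq> fst v" "snd u \<noteq> snd v" by auto
qed

lemma card_closed_segment_Int_le_1:
  fixes p q :: point
  assumes "fst p \<noteq> fst q" "snd p \<noteq> snd q"
    and "\<forall>u\<in>A. \<forall>v\<in>A. (fst u - fst v) * (snd u - snd v) * ((fst q - fst p) * (snd q - snd p)) \<le> 0"
  shows "card (closed_segment p q \<inter> A) \<le> 1"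
proof -
  have "u = v" if "u \<in> closed_segment p q \<inter> A" "v \<in> closed_segment p q \<inter> A" for u v
  proof (rule ccontr)
    assume "u \<noteq> v"
    with that have "0 < (fst u - fst v) * (snd u - snd v) * ((fst q - fst p) * (snd q - snd p))"
      using closed_segment_slope_sign[OF assms(1,2)] by blast
    with assms(3) that show False by force
  qed
  then show ?thesis
    using card_le_Suc0_iff_eq[of "closed_segment p q \<inter> A"]
    by (cases "finite (closed_segment p q \<inter> A)") auto
qed

lemma card_oblique_Int_axis_line_le_1:
  assumes "oblique s" "(\<forall>u\<in>A. fst u = a) \<or> (\<forall>u\<in>A. snd u = b)"
  shows "card (s \<inter> A) \<le> 1"
proof -
  obtain p q where s: "s = closed_segment p q" and pq: "fst p \<noteq> fst q" "snd p \<noteq> snd q"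
    using assms(1) unfolding oblique_def by blast
  have zero: "(fst u - fst v) * (snd u - snd v) * ((fst q - fst p) * (snd q - snd p)) = 0"
    if "u \<in> A" "v \<in> A" for u v
    using assms(2) that by auto
  show ?thesis
    unfolding s by (intro card_closed_segment_Int_le_1[OF pq]) (simp add: zero)
qed

text \<open>The signs of \<open>e\<close> and \<open>f\<close> give the directions of the two legs of the L-shape \<open>L\<close> with
  corner \<open>(a, b)\<close>.\<close>

lemma card_closed_segment_Int_corner_le_1:
  fixes p q :: point and a b e f :: real
  assumes "fst p \<noteq> fst q" "snd p \<noteq> snd q"
    and slope: "0 < (fst q - fst p) * (snd q - snd p) * (e * f)"
    and L: "\<forall>z\<in>L. 0 \<le> (fst z - a) * e \<and> 0 \<le> (snd z - b) * f \<and> (fst z = a \<or> snd z = b)"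
  shows "card (closed_segment p q \<inter> L) \<le> 1"
proof (rule card_closed_segment_Int_le_1[OF assms(1,2)], intro ballI)
  have legs: "(fst u - fst v) * (snd u - snd v) * (e * f) \<le> 0"
    if "u \<in> L" "v \<in> L" "fst u = a" "snd v = b" for u v
  proof -
    have "(fst u - fst v) * (snd u - snd v) * (e * f) = - (((fst v - a) * e) * ((snd u - b) * f))"
      using that(3,4) by (simp add: algebra_simps)
    then show ?thesis
      using L that(1,2) by simp
  qed
  fix u v assume "u \<in> L" "v \<in> L"
  then consider "fst u = a" "fst v = a" | "fst u = a" "snd v = b" | "snd u = b" "fst v = a"
    | "snd u = b" "snd v = b"
    using L by blast
  then have "(fst u - fst v) * (snd u - snd v) * (e * f) \<le> 0"
  proof cases
    case 3
    have "(fst u - fst v) * (snd u - snd v) = (fst v - fst u) * (snd v - snd u)"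
      by (simp add: algebra_simps)
    with legs[OF \<open>v \<in> L\<close> \<open>u \<in> L\<close> 3(2,1)] show ?thesis by simp
  qed (use legs \<open>u \<in> L\<close> \<open>v \<in> L\<close> in auto)
  with slope show "(fst u - fst v) * (snd u - snd v) * ((fst q - fst p) * (snd q - snd p)) \<le> 0"
    by (smt (verit, best) mult_le_0_iff mult_less_cancel_left mult_less_cancel_right
        mult_nonpos_nonpos)
qed

definition grid_boundary :: "real set \<Rightarrow> real set \<Rightarrow> point set" where
  "grid_boundary X Y = {z \<in> X \<times> Y. fst z \<in> {Min X, Max X} \<or> snd z \<in> {Min Y, Max Y}}"

lemma grid_boundaryD:
  assumes "finite X" "finite Y" "z \<in> grid_boundary X Y"
  shows "Min X \<le> fst z" "fst z \<le> Max X" "Min Y \<le> snd z" "snd z \<le> Max Y"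
    and "fst z = Min X \<or> fst z = Max X \<or> snd z = Min Y \<or> snd z = Max Y"
proof -
  have "fst z \<in> X" "snd z \<in> Y"
    and "fst z = Min X \<or> fst z = Max X \<or> snd z = Min Y \<or> snd z = Max Y"
    using assms(3) unfolding grid_boundary_def by auto
  then show "Min X \<le> fst z" "fst z \<le> Max X" "Min Y \<le> snd z" "snd z \<le> Max Y"
    and "fst z = Min X \<or> fst z = Max X \<or> snd z = Min Y \<or> snd z = Max Y"
    using assms(1,2) by simp_all
qed

lemma Min_less_Max_if_card_ge_2:
  fixes X :: "'a::linorder set"
  assumes "finite X" "2 \<le> card X"
  shows "Min X < Max X"
proof (rule ccontr)
  assume "\<not> Min X < Max X"
  then have "x = Min X" if "x \<in> X" for x
    using Min_le[OF assms(1) that] Max_ge[OF assms(1) that]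
    by (meson not_less order.antisym order.trans)
  then have "X \<subseteq> {Min X}" by blast
  then have "card X \<le> 1"
    using card_mono[of "{Min X}" X] by simp
  with assms(2) show False by simp
qed

lemma card_grid_boundary:
  assumes "finite X" "finite Y" "2 \<le> card X" "2 \<le> card Y"
  shows "card (grid_boundary X Y) = 2 * card X + 2 * card Y - 4"
proof -
  let ?H = "{Min X, Max X} \<times> Y" and ?V = "X \<times> {Min Y, Max Y}"
  have "X \<noteq> {}" "Y \<noteq> {}" using assms by auto
  then have ends: "{Min X, Max X} \<subseteq> X" "{Min Y, Max Y} \<subseteq> Y"
    using assms(1,2) by auto
  have less: "Min X < Max X" "Min Y < Max Y"
    using Min_less_Max_if_card_ge_2 assms by blast+
  have "grid_boundary X Y = ?H \<union> ?V"
    using ends unfolding grid_boundary_def by auto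
  moreover have "?H \<inter> ?V = {Min X, Max X} \<times> {Min Y, Max Y}"
    using ends by auto
  moreover have "card ?H + card ?V = card (?H \<union> ?V) + card (?H \<inter> ?V)"
    using assms(1,2) by (intro card_Un_Int) auto
  ultimately show ?thesis
    using less by (simp add: card_cartesian_product)
qed

lemma card_oblique_Int_grid_boundary_le_2:
  assumes "oblique s" "finite X" "finite Y"
  shows "card (s \<inter> grid_boundary X Y) \<le> 2"
proof -
  obtain p q where s: "s = closed_segment p q" and pq: "fst p \<noteq> fst q" "snd p \<noteq> snd q"
    using assms(1) unfolding oblique_def by blast
  define \<sigma> where "\<sigma> = (fst q - fst p) * (snd q - snd p)"
  let ?B = "grid_boundary X Y"
  note box = grid_boundaryD[OF assms(2,3)]
  have two_corners: "card (s \<inter> ?B) \<le> 2"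
    if "card (s \<inter> (?B \<inter> L1)) \<le> 1" "card (s \<inter> (?B \<inter> L2)) \<le> 1" "?B \<subseteq> L1 \<union> L2"
    for L1 L2
  proof -
    have "s \<inter> ?B = s \<inter> (?B \<inter> L1) \<union> s \<inter> (?B \<inter> L2)"
      using that(3) by blast
    then show ?thesis
      using card_Un_le[of "s \<inter> (?B \<inter> L1)" "s \<inter> (?B \<inter> L2)"] that(1,2) by simp
  qed
  have corner: "card (s \<inter> (?B \<inter> {z. fst z = a \<or> snd z = b})) \<le> 1"
    if "0 < \<sigma> * (e * f)" "\<forall>z\<in>?B. 0 \<le> (fst z - a) * e \<and> 0 \<le> (snd z - b) * f"
    for a b e f :: real
    unfolding s using that unfolding \<sigma>_def
    by (intro card_closed_segment_Int_corner_le_1[OF pq]) auto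
  have "\<sigma> \<noteq> 0" using pq unfolding \<sigma>_def by simp
  then consider "0 < \<sigma>" | "\<sigma> < 0" by linarith
  then show ?thesis
  proof cases
    case 1
    show ?thesis
    proof (rule two_corners)
      show "card (s \<inter> (?B \<inter> {z. fst z = Min X \<or> snd z = Min Y})) \<le> 1"
        by (intro corner[where e = 1 and f = 1]) (use 1 box(1-4) in auto)
      show "card (s \<inter> (?B \<inter> {z. fst z = Max X \<or> snd z = Max Y})) \<le> 1"
        by (intro corner[where e = "-1" and f = "-1"]) (use 1 box(1-4) in auto)
    qed (auto dest: box(5))
  next
    case 2
    show ?thesis
    proof (rule two_corners)
      show "card (s \<inter> (?B \<inter> {z. fst z = Min X \<or> snd z = Max Y})) \<le> 1"
        by (intro corner[where e = 1 and f = "-1"]) (use 2 box(1-4) in auto)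
      show "card (s \<inter> (?B \<inter> {z. fst z = Max X \<or> snd z = Min Y})) \<le> 1"
        by (intro corner[where e = "-1" and f = 1]) (use 2 box(1-4) in auto)
    qed (auto dest: box(5))
  qed
qed

lemma card_le_sum_card_Int_cover:
  assumes "finite S" "A \<subseteq> \<Union>S"
  shows "card A \<le> (\<Sum>s\<in>S. card (s \<inter> A))"
proof -
  from assms(2) have "A = (\<Union>s\<in>S. s \<inter> A)" by blast
  then show ?thesis
    using card_UN_le[OF assms(1), of "\<lambda>s. s \<inter> A"] by simp
qed

lemma card_le_mult_card_cover:
  assumes "finite S" "A \<subseteq> \<Union>S" "\<forall>s\<in>S. card (s \<inter> A) \<le> c"
  shows "card A \<le> card S * c"
  using card_le_sum_card_Int_cover[OF assms(1,2)] sum_bounded_above[of S "\<lambda>s. card (s \<inter> A)" c]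
    assms(3) by simp

lemma card_less_mult_card_cover:
  assumes "finite S" "A \<subseteq> \<Union>S" "\<forall>s\<in>S. card (s \<inter> A) \<le> c"
    and "s\<^sub>0 \<in> S" "card (s\<^sub>0 \<inter> A) < c"
  shows "card A < card S * c"
proof -
  have "(\<Sum>s\<in>S - {s\<^sub>0}. card (s \<inter> A)) \<le> card (S - {s\<^sub>0}) * c"
    using sum_bounded_above[of "S - {s\<^sub>0}" "\<lambda>s. card (s \<inter> A)" c] assms(3) by simp
  then have "(\<Sum>s\<in>S. card (s \<inter> A)) < c + (card S - 1) * c"
    using sum.remove[OF assms(1,4), of "\<lambda>s. card (s \<inter> A)"] assms(1,4,5) by simp
  also have "c + (card S - 1) * c = card S * c"
    using assms(1,4) by (cases "card S") (auto simp: card_gt_0_iff[symmetric])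
  finally show ?thesis
    using card_le_sum_card_Int_cover[OF assms(1,2)] by simp
qed

text \<open>Here \<open>Q\<close> lies strictly above the line through \<open>(x\<^sub>1, y\<^sub>1)\<close> and \<open>(x\<^sub>2, b)\<close>, while
  \<open>(x\<^sub>2, y\<^sub>1)\<close> lies strictly below it; the intermediate value theorem on \<open>[(x\<^sub>2, y\<^sub>1), Q]\<close>
  yields a point of that line whose abscissa lies in \<open>[x\<^sub>1, x\<^sub>2]\<close>.\<close>

lemma closed_segments_cross:
  fixes x\<^sub>1 x\<^sub>2 y\<^sub>1 b :: real and Q :: point
  assumes "x\<^sub>1 < x\<^sub>2" "y\<^sub>1 < b" "x\<^sub>1 \<le> fst Q" "fst Q \<le> x\<^sub>2"
    and above: "(b - y\<^sub>1) * (fst Q - x\<^sub>1) < (x\<^sub>2 - x\<^sub>1) * (snd Q - y\<^sub>1)"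
  shows "closed_segment (x\<^sub>1, y\<^sub>1) (x\<^sub>2, b) \<inter> closed_segment (x\<^sub>2, y\<^sub>1) Q \<noteq> {}"
proof -
  define n :: point where "n = (y\<^sub>1 - b, x\<^sub>2 - x\<^sub>1)"
  have n: "inner n w - inner n (x\<^sub>1, y\<^sub>1) = (y\<^sub>1 - b) * (fst w - x\<^sub>1) + (x\<^sub>2 - x\<^sub>1) * (snd w - y\<^sub>1)"
    for w
    by (cases w) (simp add: n_def algebra_simps)
  have "(y\<^sub>1 - b) * (x\<^sub>2 - x\<^sub>1) < 0"
    using assms(1,2) by (simp add: mult_neg_pos)
  then have "inner n (x\<^sub>2, y\<^sub>1) \<le> inner n (x\<^sub>1, y\<^sub>1)"
    using n[of "(x\<^sub>2, y\<^sub>1)"] by simp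
  moreover have "inner n (x\<^sub>1, y\<^sub>1) \<le> inner n Q"
    using n[of Q] above by (simp add: algebra_simps)
  ultimately obtain z where z: "z \<in> closed_segment (x\<^sub>2, y\<^sub>1) Q" "inner n z = inner n (x\<^sub>1, y\<^sub>1)"
    using connected_ivt_hyperplane[OF connected_segment ends_in_segment] by blast
  have on_line: "(x\<^sub>2 - x\<^sub>1) * (snd z - y\<^sub>1) = (b - y\<^sub>1) * (fst z - x\<^sub>1)"
    using n[of z] z(2) by (simp add: algebra_simps)
  have "fst z \<in> closed_segment x\<^sub>2 (fst Q)"
    using closed_segment_PairD[of "fst z" "snd z" x\<^sub>2 y\<^sub>1 "fst Q" "snd Q"] z(1) by simp
  then have "x\<^sub>1 \<le> fst z" "fst z \<le> x\<^sub>2"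
    using assms(3,4) by (auto simp: closed_segment_eq_real_ivl split: if_splits)
  define u where "u = (fst z - x\<^sub>1) / (x\<^sub>2 - x\<^sub>1)"
  have "0 \<le> u" "u \<le> 1"
    using \<open>x\<^sub>1 \<le> fst z\<close> \<open>fst z \<le> x\<^sub>2\<close> assms(1) by (simp_all add: u_def field_simps)
  moreover have "fst z = x\<^sub>1 + u * (x\<^sub>2 - x\<^sub>1)" "snd z = y\<^sub>1 + u * (b - y\<^sub>1)"
    using on_line assms(1) by (simp_all add: u_def field_simps)
  then have "z = (1 - u) *\<^sub>R (x\<^sub>1, y\<^sub>1) + u *\<^sub>R (x\<^sub>2, b)"
    by (simp add: prod_eq_iff algebra_simps)
  ultimately have "z \<in> closed_segment (x\<^sub>1, y\<^sub>1) (x\<^sub>2, b)"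
    unfolding in_segment by blast
  with z(1) show ?thesis by blast
qed

lemma corner_segments_cross:
  fixes x\<^sub>1 x\<^sub>2 y\<^sub>1 y\<^sub>2 :: real and P Q :: point
  assumes "x\<^sub>1 < x\<^sub>2" "fst P = x\<^sub>2" "y\<^sub>1 < snd P" "snd P \<le> y\<^sub>2"
    and "x\<^sub>1 \<le> fst Q" "fst Q < x\<^sub>2" "y\<^sub>1 < snd Q" "snd Q \<le> y\<^sub>2" "fst Q = x\<^sub>1 \<or> snd Q = y\<^sub>2"
  shows "closed_segment (x\<^sub>1, y\<^sub>1) P \<inter> closed_segment (x\<^sub>2, y\<^sub>1) Q \<noteq> {}"
proof -
  obtain b where P: "P = (x\<^sub>2, b)" using assms(2) by (cases P) simp
  have "(b - y\<^sub>1) * (fst Q - x\<^sub>1) < (x\<^sub>2 - x\<^sub>1) * (snd Q - y\<^sub>1)"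
    using assms(9)
  proof
    assume "fst Q = x\<^sub>1"
    then show ?thesis using assms(1,7) by simp
  next
    assume "snd Q = y\<^sub>2"
    have "(b - y\<^sub>1) * (fst Q - x\<^sub>1) \<le> (y\<^sub>2 - y\<^sub>1) * (fst Q - x\<^sub>1)"
      using assms(4,5) P by (intro mult_right_mono) auto
    also have "\<dots> < (y\<^sub>2 - y\<^sub>1) * (x\<^sub>2 - x\<^sub>1)"
      using assms(3,4,6) P by (intro mult_strict_left_mono) auto
    finally show ?thesis
      using \<open>snd Q = y\<^sub>2\<close> by (simp add: mult.commute)
  qed
  then show ?thesis
    unfolding P using assms(1,3,5,6) P by (intro closed_segments_cross) auto
qed

lemma closed_segment_swap:
  "closed_segment (prod.swap p) (prod.swap q) = prod.swap ` closed_segment p q"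
  by (rule closed_segment_linear_image) (simp add: linear_iff)

lemma noncrossing_common_endpoint:
  assumes "noncrossing S" "s \<in> S" "t \<in> S" "s \<noteq> t"
    and "c \<in> s" "P \<in> s" "A \<in> t" "Q \<in> t"
    and "z \<in> closed_segment c P" "z \<in> closed_segment A Q"
  shows "z \<in> {c, P} \<inter> {A, Q}"
proof -
  obtain p q p' q' where s: "s = closed_segment p q" and t: "t = closed_segment p' q'"
    and st: "s \<inter> t \<subseteq> {p, q} \<inter> {p', q'}"
    using assms(1-4) unfolding noncrossing_def by meson
  have "closed_segment c P \<subseteq> s" "closed_segment A Q \<subseteq> t"
    using assms(5-8) unfolding s t by (simp_all add: subset_closed_segment)
  with st assms(9,10) have "z \<in> {p, q}" "z \<in> {p', q'}"
    by blast+
  then have "z extreme_point_of s" "z extreme_point_of t"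
    unfolding s t by (auto simp: extreme_point_of_segment)
  then show ?thesis
    using assms(5-10) by (auto simp: extreme_point_of_def open_segment_def)
qed

lemma noncrossing_meet_only_at_shared_endpoint:
  assumes "noncrossing S" "\<forall>s\<in>S. oblique s" "s \<in> S" "t \<in> S"
    and "c \<in> s" "P \<in> s" "A \<in> t" "Q \<in> t" "c \<noteq> A" "fst c = fst A \<or> snd c = snd A"
    and "closed_segment c P \<inter> closed_segment A Q \<noteq> {}"
  shows "c = Q \<or> P = A \<or> P = Q"
proof -
  have "s \<noteq> t"
    using oblique_points_differ[of s c A] assms(2,3,5,7,9,10) by blast
  moreover obtain z where "z \<in> closed_segment c P" "z \<in> closed_segment A Q"
    using assms(11) by blast
  ultimately have "z \<in> {c, P} \<inter> {A, Q}"
    using noncrossing_common_endpoint[OF assms(1,3,4) _ assms(5-8)] by blast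
  with assms(9) show ?thesis by blast
qed

lemma oblique_cover_partner:
  assumes "\<forall>s\<in>S. oblique s" "B \<subseteq> \<Union>S" "\<forall>s\<in>S. 2 \<le> card (s \<inter> B)" "c \<in> B"
  obtains s P where "s \<in> S" "c \<in> s" "P \<in> s" "P \<in> B" "fst P \<noteq> fst c" "snd P \<noteq> snd c"
proof -
  obtain s where s: "s \<in> S" "c \<in> s"
    using assms(2,4) by blast
  have "\<not> s \<inter> B \<subseteq> {c}"
  proof
    assume "s \<inter> B \<subseteq> {c}"
    then have "card (s \<inter> B) \<le> 1"
      using card_mono[of "{c}" "s \<inter> B"] by simp
    with assms(3) s(1) show False by fastforce
  qed
  then obtain P where "P \<in> s" "P \<in> B" "P \<noteq> c" by blast
  with s assms(1) show thesis
    using oblique_points_differ that by metis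
qed

lemma noncrossing_ex_segment_Int_grid_boundary_less_2:
  assumes "noncrossing S" "\<forall>s\<in>S. oblique s" "grid_boundary X Y \<subseteq> \<Union>S"
    and "finite X" "finite Y" "2 \<le> card X" "2 \<le> card Y"
  shows "\<exists>s\<in>S. card (s \<inter> grid_boundary X Y) < 2"
proof (rule ccontr)
  let ?B = "grid_boundary X Y"
  assume "\<not> ?thesis"
  then have partner: "\<forall>s\<in>S. 2 \<le> card (s \<inter> ?B)" by auto
  define x\<^sub>1 x\<^sub>2 y\<^sub>1 y\<^sub>2 where "x\<^sub>1 = Min X" and "x\<^sub>2 = Max X" and "y\<^sub>1 = Min Y" and "y\<^sub>2 = Max Y"
  note box = grid_boundaryD[OF assms(4,5), folded x\<^sub>1_def x\<^sub>2_def y\<^sub>1_def y\<^sub>2_def]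
  have less: "x\<^sub>1 < x\<^sub>2" "y\<^sub>1 < y\<^sub>2"
    unfolding x\<^sub>1_def x\<^sub>2_def y\<^sub>1_def y\<^sub>2_def using Min_less_Max_if_card_ge_2 assms(4-7) by blast+
  have "X \<noteq> {}" "Y \<noteq> {}" using assms(6,7) by auto
  then have corners: "(x\<^sub>1, y\<^sub>1) \<in> ?B" "(x\<^sub>2, y\<^sub>1) \<in> ?B" "(x\<^sub>1, y\<^sub>2) \<in> ?B"
    unfolding x\<^sub>1_def x\<^sub>2_def y\<^sub>1_def y\<^sub>2_def grid_boundary_def using assms(4,5) by auto
  obtain s\<^sub>1 P
    where s\<^sub>1: "s\<^sub>1 \<in> S" "(x\<^sub>1, y\<^sub>1) \<in> s\<^sub>1" "P \<in> s\<^sub>1" "P \<in> ?B" "fst P \<noteq> x\<^sub>1" "snd P \<noteq> y\<^sub>1"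
    using oblique_cover_partner[OF assms(2,3) partner corners(1)] by auto
  have P: "x\<^sub>1 < fst P" "fst P \<le> x\<^sub>2" "y\<^sub>1 < snd P" "snd P \<le> y\<^sub>2"
    using box[OF s\<^sub>1(4)] s\<^sub>1(5,6) by auto
  from box(5)[OF s\<^sub>1(4)] s\<^sub>1(5,6) consider "fst P = x\<^sub>2" | "snd P = y\<^sub>2" by blast
  then show False
  proof cases
    case 1
    obtain s\<^sub>2 Q
      where s\<^sub>2: "s\<^sub>2 \<in> S" "(x\<^sub>2, y\<^sub>1) \<in> s\<^sub>2" "Q \<in> s\<^sub>2" "Q \<in> ?B" "fst Q \<noteq> x\<^sub>2" "snd Q \<noteq> y\<^sub>1"
      using oblique_cover_partner[OF assms(2,3) partner corners(2)] by auto
    have Q: "x\<^sub>1 \<le> fst Q" "fst Q < x\<^sub>2" "y\<^sub>1 < snd Q" "snd Q \<le> y\<^sub>2" "fst Q = x\<^sub>1 \<or> snd Q = y\<^sub>2"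
      using box[OF s\<^sub>2(4)] s\<^sub>2(5,6) by auto
    have "snd P \<noteq> y\<^sub>1" "snd Q \<noteq> y\<^sub>1" "fst P \<noteq> fst Q"
      using 1 P(3) Q(2,3) by auto
    moreover have "(x\<^sub>1, y\<^sub>1) = Q \<or> P = (x\<^sub>2, y\<^sub>1) \<or> P = Q"
      using noncrossing_meet_only_at_shared_endpoint[OF assms(1,2) s\<^sub>1(1) s\<^sub>2(1) s\<^sub>1(2,3) s\<^sub>2(2,3)]
        corner_segments_cross[OF less(1) 1 P(3,4) Q] less(1) by simp
    ultimately show False by auto
  next
    case 2
    obtain s\<^sub>3 R
      where s\<^sub>3: "s\<^sub>3 \<in> S" "(x\<^sub>1, y\<^sub>2) \<in> s\<^sub>3" "R \<in> s\<^sub>3" "R \<in> ?B" "fst R \<noteq> x\<^sub>1" "snd R \<noteq> y\<^sub>2"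
      using oblique_cover_partner[OF assms(2,3) partner corners(3)] by auto
    have R: "x\<^sub>1 < fst R" "fst R \<le> x\<^sub>2" "y\<^sub>1 \<le> snd R" "snd R < y\<^sub>2" "snd R = y\<^sub>1 \<or> fst R = x\<^sub>2"
      using box[OF s\<^sub>3(4)] s\<^sub>3(5,6) by auto
    have "closed_segment (prod.swap (x\<^sub>1, y\<^sub>1)) (prod.swap P)
        \<inter> closed_segment (prod.swap (x\<^sub>1, y\<^sub>2)) (prod.swap R) \<noteq> {}"
      using corner_segments_cross[of y\<^sub>1 y\<^sub>2 "prod.swap P" x\<^sub>1 x\<^sub>2 "prod.swap R"] less(2) 2 P(1,2) R
      by simp
    then have "closed_segment (x\<^sub>1, y\<^sub>1) P \<inter> closed_segment (x\<^sub>1, y\<^sub>2) R \<noteq> {}"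
      unfolding closed_segment_swap image_Int[OF inj_swap, symmetric] by blast
    then have "(x\<^sub>1, y\<^sub>1) = R \<or> P = (x\<^sub>1, y\<^sub>2) \<or> P = R"
      using noncrossing_meet_only_at_shared_endpoint[OF assms(1,2) s\<^sub>1(1) s\<^sub>3(1) s\<^sub>1(2,3) s\<^sub>3(2,3)]
        less(2) by simp
    moreover have "fst P \<noteq> x\<^sub>1" "fst R \<noteq> x\<^sub>1" "snd P \<noteq> snd R"
      using 2 P(1) R(1,4) by auto
    ultimately show False by auto
  qed
qed

theorem lemma7:
  fixes X Y :: "real set" and k l :: nat and S :: "point set set"
  assumes "finite X" "finite Y" "card X = k" "card Y = l" "k \<ge> 1" "l \<ge> 1"
    and "finite S"
    and "\<forall>s\<in>S. is_segment s \<and> \<not> horizontal s \<and> \<not> vertical s"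
    and "X \<times> Y \<subseteq> \<Union>S"
  shows "card S \<ge> k + l - 2 \<and>
         ((k = 1 \<or> l = 1 \<or> noncrossing S) \<longrightarrow> card S \<ge> k + l - 1)"
proof -
  have oblique: "\<forall>s\<in>S. oblique s"
    using assms(8) oblique_if_not_axis_parallel by blast
  show ?thesis
  proof (cases "k = 1 \<or> l = 1")
    case True
    then have "(\<exists>a. X = {a}) \<or> (\<exists>b. Y = {b})"
      using assms(3,4) by (auto simp: card_1_singleton_iff)
    then have "(\<exists>a. \<forall>u\<in>X \<times> Y. fst u = a) \<or> (\<exists>b. \<forall>u\<in>X \<times> Y. snd u = b)"
      by auto
    then have "\<forall>s\<in>S. card (s \<inter> (X \<times> Y)) \<le> 1"
      using oblique card_oblique_Int_axis_line_le_1 by blast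
    then have "card (X \<times> Y) \<le> card S"
      using card_le_mult_card_cover[OF assms(7,9)] by fastforce
    moreover have "card (X \<times> Y) = k + l - 1"
      using True assms(3-6) by (auto simp: card_cartesian_product)
    ultimately show ?thesis by simp
  next
    case False
    let ?B = "grid_boundary X Y"
    have kl: "2 \<le> k" "2 \<le> l" using False assms(5,6) by auto
    have cover: "?B \<subseteq> \<Union>S" using assms(9) by (auto simp: grid_boundary_def)
    have at_most_2: "\<forall>s\<in>S. card (s \<inter> ?B) \<le> 2"
      using oblique card_oblique_Int_grid_boundary_le_2 assms(1,2) by blast
    have "card ?B = 2 * k + 2 * l - 4"
      using card_grid_boundary assms(1-4) kl by simp
    moreover have "card ?B \<le> card S * 2"
      using card_le_mult_card_cover[OF assms(7) cover at_most_2] .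
    moreover have "card ?B < card S * 2" if "noncrossing S"
      using noncrossing_ex_segment_Int_grid_boundary_less_2[OF that oblique cover assms(1,2)] kl assms(3,4)
        card_less_mult_card_cover[OF assms(7) cover at_most_2] by blast
    ultimately show ?thesis
      using False kl by linarith
  qed
qed

end
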